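(* In the one-step setting below, $\|\nabla\varepsilon_t^{\rm OGD}(q(x_{t+1}))\|_2\le G^5\big(3\hat G_F^2+\hat G_F^3\eta\big)\eta$.
   Context: One-step setting. $\mathcal X,\mathcal Y\subset\mathbb R^d$ convex compact, $q:\mathcal X\to\mathcal Y$ a smooth bijection with Jacobian $J_q$, $D_R(x\|y)=R(x)-R(y)-\nabla R(y)^\top(x-y)$, and: (A1) There is a twice continuously differentiable, strictly convex $R:\mathcal Y\to\mathbb R$ such that $[\nabla^2R(q(x))]^{-1}=J_q(x)J_q(x)^\top$ for all $x\in\mathcal X$. (A2) There is $G>1$ such that: $q$ is $G$-Lipschitz on $\mathcal X$; the first and second derivatives of $q^{-1}$ are bounded by $G$; $R$ is $1$-strongly convex (Euclidean norm) and smooth with first and third derivatives bounded by $G$; for every $z\in\mathcal Y$ the map $w\mapsto D_R(z\|w)$ is $G$-Lipschitz. Fix $\eta>0$, $x_t\in\mathcal X$, $y_t:=q(x_t)$, $g_t\in\mathbb R^d$ with $\|g_t\|\le\hat G_F$, and $x_{t+1}=\arg\min_{x\in\mathcal X}\{g_t^\top(x-x_t)+\frac1{2\eta}\|x-x_t\|_2^2\}=\Pi_{\mathcal X}(x_t-\eta g_t)$. Let $\varepsilon^q_t(y):=q^{-1}(y)-q^{-1}(y_t)-J_q(x_t)^{-1}(y-y_t)$ and $$\varepsilon_t^{\rm OGD}(y):=g_t^\top\varepsilon^q_t(y)+\tfrac1\eta\Big(\tfrac12\|\varepsilon^q_t(y)\|_2^2+\big\langle J_q(x_t)^{-1}(y-y_t),\varepsilon^q_t(y)\big\rangle\Big).$$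 *)

theory Defs
  imports "HOL-Analysis.Analysis"
begin

definition strict_convex_on :: "'a::real_vector set \<Rightarrow> ('a \<Rightarrow> real) \<Rightarrow> bool" where
  "strict_convex_on S f \<longleftrightarrow> convex S \<and>
     (\<forall>x\<in>S. \<forall>y\<in>S. \<forall>t::real. x \<noteq> y \<and> 0 < t \<and> t < 1 \<longrightarrow>
        f ((1 - t) *\<^sub>R x + t *\<^sub>R y) < (1 - t) * f x + t * f y)"

definition strongly_convex_on :: "real \<Rightarrow> 'a::real_normed_vector set \<Rightarrow> ('a \<Rightarrow> real) \<Rightarrow> bool" where
  "strongly_convex_on \<mu> S f \<longleftrightarrow> convex S \<and>
     (\<forall>x\<in>S. \<forall>y\<in>S. \<forall>t::real. 0 \<le> t \<and> t \<le> 1 \<longrightarrow>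
        f ((1 - t) *\<^sub>R x + t *\<^sub>R y)
          \<le> (1 - t) * f x + t * f y - \<mu> / 2 * t * (1 - t) * (norm (x - y))\<^sup>2)"

definition bregman :: "('a::real_inner \<Rightarrow> real) \<Rightarrow> ('a \<Rightarrow> 'a) \<Rightarrow> 'a \<Rightarrow> 'a \<Rightarrow> real" where
  "bregman R gradR x y = R x - R y - inner (gradR y) (x - y)"

definition eps_q ::
  "(real^'n \<Rightarrow> real^'n) \<Rightarrow> (real^'n \<Rightarrow> real^'n) \<Rightarrow> (real^'n \<Rightarrow> real^'n^'n)
     \<Rightarrow> real^'n \<Rightarrow> real^'n \<Rightarrow> real^'n" where
  "eps_q q qinv Jq xt y = qinv y - qinv (q xt) - matrix_inv (Jq xt) *v (y - q xt)"

definition eps_OGD ::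
  "(real^'n \<Rightarrow> real^'n) \<Rightarrow> (real^'n \<Rightarrow> real^'n) \<Rightarrow> (real^'n \<Rightarrow> real^'n^'n)
     \<Rightarrow> real^'n \<Rightarrow> real^'n \<Rightarrow> real \<Rightarrow> real^'n \<Rightarrow> real" where
  "eps_OGD q qinv Jq xt g \<eta> y =
     inner g (eps_q q qinv Jq xt y)
     + (1 / \<eta>) * ((1/2) * (norm (eps_q q qinv Jq xt y))\<^sup>2
                 + inner (matrix_inv (Jq xt) *v (y - q xt)) (eps_q q qinv Jq xt y))"

end

theory Submission
  imports Defs
begin

text \<open>
  Write \<open>y\<^sub>t = q x\<^sub>t\<close>, \<open>y = q x\<^sub>t\<^sub>+\<^sub>1\<close> and \<open>r = \<parallel>y - y\<^sub>t\<parallel>\<close>.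
  Since \<open>q\<^sup>-\<^sup>1 \<circ> q = id\<close>, \<open>J\<^sub>q(x\<^sub>t)\<^sup>-\<^sup>1 = Dq\<^sup>-\<^sup>1(y\<^sub>t)\<close>, and the product rule gives
  the gradient of \<open>\<epsilon>\<^sup>O\<^sup>G\<^sup>D\<close> at \<open>y\<close> as \<open>M\<^sup>T g + \<eta>\<^sup>-\<^sup>1 (Dq\<^sup>-\<^sup>1(y)\<^sup>T e + M\<^sup>T w)\<close>
  with \<open>M = Dq\<^sup>-\<^sup>1(y) - Dq\<^sup>-\<^sup>1(y\<^sub>t)\<close>, \<open>e = \<epsilon>\<^sup>q\<^sub>t(y)\<close> and
  \<open>w = Dq\<^sup>-\<^sup>1(y\<^sub>t)(y - y\<^sub>t)\<close>. The bound \<open>G\<close> on the second derivative of \<open>q\<^sup>-\<^sup>1\<close>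
  gives \<open>\<parallel>M\<parallel> \<le> G r\<close> (mean value theorem) and \<open>\<parallel>e\<parallel> \<le> G r\<^sup>2\<close> (linearization error),
  while \<open>\<parallel>w\<parallel> \<le> G r\<close>. The projected step moves by at most \<open>\<eta> \<parallel>g\<parallel>\<close>, so
  \<open>r \<le> G \<eta> GF\<close>, and the gradient is bounded by \<open>GF G r + 2 G\<^sup>2 r\<^sup>2 / \<eta> \<le> 3 G\<^sup>5 GF\<^sup>2 \<eta>\<close>.
\<close>

lemma matrix_inv_eqI:
  fixes A B :: "'a::field^'n^'n"
  assumes "B ** A = mat 1"
  shows "matrix_inv A = B"
  unfolding matrix_inv_def
proof (rule some_equality)
  show "A ** B = mat 1 \<and> B ** A = mat 1"
    using assms matrix_left_right_inverse by blast
next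
  fix C assume "A ** C = mat 1 \<and> C ** A = mat 1"
  then have "B ** (A ** C) = B" by (simp add: matrix_mul_rid)
  then show "C = B"
    using assms by (simp add: matrix_mul_assoc matrix_mul_lid)
qed

lemma matrix_inv_jacobian_of_left_inverse:
  fixes f g :: "real^'n \<Rightarrow> real^'n"
  assumes "open U" "x \<in> U" and left_inverse: "\<And>u. u \<in> U \<Longrightarrow> g (f u) = u"
    and f: "(f has_derivative (\<lambda>h. Jf *v h)) (at x)"
    and g: "(g has_derivative (\<lambda>h. Jg *v h)) (at (f x))"
  shows "matrix_inv Jf = Jg"
proof (rule matrix_inv_eqI)
  have "((g \<circ> f) has_derivative (\<lambda>h. (Jg ** Jf) *v h)) (at x)"
    using diff_chain_at[OF f g] by (simp add: o_def matrix_vector_mul_assoc)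
  then have "(id has_derivative (\<lambda>h. (Jg ** Jf) *v h)) (at x)"
    by (rule has_derivative_transform_within_open[OF _ assms(1,2)]) (simp add: left_inverse)
  then have "(\<lambda>h. (Jg ** Jf) *v h) = id"
    using has_derivative_unique has_derivative_id by blast
  then show "Jg ** Jf = mat 1"
    unfolding matrix_eq by (simp add: fun_eq_iff)
qed

lemma norm_vector_matrix_mult_le:
  fixes M :: "real^'n^'m"
  assumes "\<And>k. norm (M *v k) \<le> C * norm k"
  shows "norm (x v* M) \<le> C * norm x"
proof -
  have "0 \<le> C"
    using order_trans[OF norm_ge_zero assms[of "axis undefined 1"]] by simp
  have "(norm (x v* M))\<^sup>2 = inner x (M *v (x v* M))"
    by (simp add: power2_norm_eq_inner dot_lmul_matrix)
  also have "\<dots> \<le> norm x * norm (M *v (x v* M))"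
    by (rule norm_cauchy_schwarz)
  also have "\<dots> \<le> norm x * (C * norm (x v* M))"
    by (simp add: assms mult_left_mono)
  finally show ?thesis
    using \<open>0 \<le> C\<close> by (cases "x v* M = 0") (auto simp: power2_eq_square mult_ac)
qed

lemma bounded_linear_matrix_vector_mult_left:
  "bounded_linear (\<lambda>M::real^'n^'m. M *v k)"
  by (rule linear_conv_bounded_linear[THEN iffD1], rule linearI)
    (simp_all add: matrix_vector_mult_add_rdistrib scaleR_matrix_vector_assoc)

lemma differentiable_bound_matrix_vector_mult:
  fixes F :: "'a::euclidean_space \<Rightarrow> real^'n^'m"
  assumes "convex S"
    and F: "\<And>y. y \<in> S \<Longrightarrow> (F has_derivative F' y) (at y within S)"
    and F'_le: "\<And>y h k. y \<in> S \<Longrightarrow> norm (F' y h *v k) \<le> L * norm h * norm k"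
    and "a \<in> S" "b \<in> S"
  shows "norm ((F b - F a) *v k) \<le> L * norm (b - a) * norm k"
proof -
  have "norm (F b *v k - F a *v k) \<le> L * norm k * norm (b - a)"
  proof (rule differentiable_bound[OF \<open>convex S\<close> _ _ \<open>b \<in> S\<close> \<open>a \<in> S\<close>])
    show "((\<lambda>y. F y *v k) has_derivative (\<lambda>h. F' y h *v k)) (at y within S)" if "y \<in> S" for y
      using bounded_linear.has_derivative[OF bounded_linear_matrix_vector_mult_left F[OF that]] .
    show "onorm (\<lambda>h. F' y h *v k) \<le> L * norm k" if "y \<in> S" for y
      using F'_le[OF that] by (intro onorm_le) (simp add: mult_ac)
  qed
  then show ?thesis
    by (simp add: matrix_vector_mult_diff_rdistrib mult_ac)
qed

lemma linearization_error_le_lipschitz_jacobian: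
  fixes f :: "real^'m \<Rightarrow> real^'n" and Df :: "real^'m \<Rightarrow> real^'m^'n"
  assumes "convex S" "0 \<le> L"
    and f: "\<And>y. y \<in> S \<Longrightarrow> (f has_derivative (\<lambda>h. Df y *v h)) (at y within S)"
    and Df_lipschitz: "\<And>x y k. x \<in> S \<Longrightarrow> y \<in> S \<Longrightarrow>
      norm ((Df y - Df x) *v k) \<le> L * norm (y - x) * norm k"
    and "a \<in> S" "b \<in> S"
  shows "norm (f b - f a - Df a *v (b - a)) \<le> L * (norm (b - a))\<^sup>2"
proof -
  have segment: "closed_segment a b \<subseteq> S"
    using assms closed_segment_subset by blast
  have "norm (f b - f a - Df a *v (b - a)) \<le> norm (b - a) * (L * norm (b - a))"
  proof (rule differentiable_bound_linearization)
    show "a + t *\<^sub>R (b - a) \<in> closed_segment a b" if "t \<in> {0..1}" for t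
    proof -
      have "a + t *\<^sub>R (b - a) = (1 - t) *\<^sub>R a + t *\<^sub>R b"
        by (simp add: algebra_simps)
      then show ?thesis
        using that by (auto simp: in_segment)
    qed
    show "(f has_derivative (\<lambda>h. Df y *v h)) (at y within closed_segment a b)"
      if "y \<in> closed_segment a b" for y
      using has_derivative_subset[OF f segment] that segment by blast
    show "onorm ((\<lambda>h. Df y *v h) - (\<lambda>h. Df a *v h)) \<le> L * norm (b - a)"
      if "y \<in> closed_segment a b" for y
    proof (rule onorm_le)
      fix h
      have "norm ((Df y - Df a) *v h) \<le> L * norm (y - a) * norm h"
        using Df_lipschitz that segment \<open>a \<in> S\<close> by blast
      also have "\<dots> \<le> L * norm (b - a) * norm h"
        using segment_bound1[OF that] \<open>0 \<le> L\<close> by (simp add: mult_left_mono mult_right_mono)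
      finally show "norm (((\<lambda>h. Df y *v h) - (\<lambda>h. Df a *v h)) h) \<le> L * norm (b - a) * norm h"
        by (simp add: matrix_vector_mult_diff_rdistrib)
    qed
  qed simp
  then show ?thesis
    by (simp add: power2_eq_square mult_ac)
qed

lemma proximal_step_norm_le:
  fixes g x0 x1 :: "'a::real_inner"
  assumes "convex X" "x0 \<in> X" "x1 \<in> X" "\<eta> > 0"
    and x1_min: "\<And>x. x \<in> X \<Longrightarrow>
        inner g (x1 - x0) + 1 / (2 * \<eta>) * (norm (x1 - x0))\<^sup>2
          \<le> inner g (x - x0) + 1 / (2 * \<eta>) * (norm (x - x0))\<^sup>2"
  shows "norm (x1 - x0) \<le> \<eta> * norm g"
proof -
  define d where "d = x1 - x0"
  define K where "K = (norm d)\<^sup>2 / \<eta>"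
  txt \<open>Comparing with the feasible points \<open>x0 + s (x1 - x0)\<close>, \<open>s \<rightarrow> 1\<close>, yields the
    first-order optimality condition.\<close>
  have "K \<le> - inner g d"
  proof (rule field_le_mult_one_interval)
    fix s :: real assume s: "0 < s" "s < 1"
    have "x0 + s *\<^sub>R d = (1 - s) *\<^sub>R x0 + s *\<^sub>R x1"
      by (simp add: d_def algebra_simps)
    then have "x0 + s *\<^sub>R d \<in> X"
      using s assms(1-3) by (simp add: convexD)
    from x1_min[OF this]
    have "inner g d + 1 / (2 * \<eta>) * (norm d)\<^sup>2
        \<le> inner g (s *\<^sub>R d) + 1 / (2 * \<eta>) * (norm (s *\<^sub>R d))\<^sup>2"
      by (simp add: d_def[symmetric])
    then have "inner g d + K / 2 \<le> s * inner g d + s\<^sup>2 * (K / 2)"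
      using s by (simp add: K_def power_mult_distrib)
    then have "(1 - s) * ((1 + s) * (K / 2)) \<le> (1 - s) * - inner g d"
      by (simp add: power2_eq_square field_simps)
    then have "(1 + s) * (K / 2) \<le> - inner g d"
      by (rule mult_left_le_imp_le) (use s in simp)
    moreover have "s * K \<le> K"
      using s \<open>\<eta> > 0\<close> by (intro mult_left_le_one_le) (auto simp: K_def)
    ultimately show "s * K \<le> - inner g d"
      by (simp add: algebra_simps)
  qed
  also have "\<dots> \<le> norm g * norm d"
    using norm_cauchy_schwarz[of "-g" d] by simp
  finally have "norm d * norm d \<le> (\<eta> * norm g) * norm d"
    using \<open>\<eta> > 0\<close> by (simp add: K_def power2_eq_square field_simps)
  then show ?thesis
    using \<open>\<eta> > 0\<close> by (cases "d = 0") (auto simp: d_def)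
qed

lemma eps_q_has_derivative:
  assumes "(qinv has_derivative (\<lambda>h. D *v h)) (at y)"
  shows "(eps_q q qinv Jq xt has_derivative (\<lambda>h. (D - matrix_inv (Jq xt)) *v h)) (at y)"
proof -
  have "(eps_q q qinv Jq xt has_derivative
      (\<lambda>h. D *v h - 0 - matrix_inv (Jq xt) *v (h - 0))) (at y)"
    unfolding eps_q_def[abs_def]
    by (intro has_derivative_diff assms has_derivative_const has_derivative_ident
        bounded_linear.has_derivative[OF matrix_vector_mul_bounded_linear])
  then show ?thesis
    by (simp add: matrix_vector_mult_diff_rdistrib)
qed

lemma eps_OGD_has_gderiv:
  fixes q qinv :: "real^'n \<Rightarrow> real^'n" and Jq :: "real^'n \<Rightarrow> real^'n^'n"
    and D :: "real^'n^'n" and xt y :: "real^'n"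
  assumes "(qinv has_derivative (\<lambda>h. D *v h)) (at y)"
  defines "A \<equiv> matrix_inv (Jq xt)"
  defines "M \<equiv> D - A" and "e \<equiv> eps_q q qinv Jq xt y" and "w \<equiv> A *v (y - q xt)"
  shows "GDERIV (eps_OGD q qinv Jq xt g \<eta>) y :>
    g v* M + (1 / \<eta>) *\<^sub>R (e v* D + w v* M)"
proof -
  let ?e = "eps_q q qinv Jq xt"
  have eps_OGD_eq: "eps_OGD q qinv Jq xt g \<eta> = (\<lambda>y. inner g (?e y)
      + (1 / \<eta>) * ((1/2) * inner (?e y) (?e y) + inner (A *v (y - q xt)) (?e y)))"
    by (simp add: fun_eq_iff eps_OGD_def A_def power2_norm_eq_inner)
  have e: "(?e has_derivative (\<lambda>h. M *v h)) (at y)"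
    unfolding M_def A_def by (rule eps_q_has_derivative[OF assms(1)])
  have w: "((\<lambda>y. A *v (y - q xt)) has_derivative (\<lambda>h. A *v h)) (at y)"
    using bounded_linear.has_derivative[OF matrix_vector_mul_bounded_linear,
        OF has_derivative_diff[OF has_derivative_ident has_derivative_const]]
    by simp
  have "((\<lambda>y. inner g (?e y)
      + (1 / \<eta>) * ((1/2) * inner (?e y) (?e y) + inner (A *v (y - q xt)) (?e y)))
      has_derivative (\<lambda>h. inner h (g v* M + (1 / \<eta>) *\<^sub>R (e v* D + w v* M)))) (at y)"
    by (rule has_derivative_eq_rhs, (rule derivative_intros e w)+)
      (simp add: fun_eq_iff e_def w_def M_def dot_lmul_matrix inner_commute[of _ "?e y"]
        inner_commute[of _ "g v* _"] inner_commute[of _ "_ v* _"]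
        matrix_vector_mult_diff_rdistrib algebra_simps)
  then show ?thesis
    unfolding gderiv_def eps_OGD_eq .
qed

lemma norm_eps_OGD_gradient_le:
  fixes g e w :: "real^'n" and M P :: "real^'n^'n"
  assumes "\<eta> > 0" "norm g \<le> GF" "norm e \<le> G * r\<^sup>2" "norm w \<le> G * r"
    and M: "\<And>k. norm (M *v k) \<le> G * r * norm k"
    and P: "\<And>k. norm (P *v k) \<le> G * norm k"
  shows "norm (g v* M + (1 / \<eta>) *\<^sub>R (e v* P + w v* M)) \<le> GF * G * r + 2 * G\<^sup>2 * r\<^sup>2 / \<eta>"
proof -
  have "0 \<le> G * r" "0 \<le> G"
    using order_trans[OF norm_ge_zero M[of "axis undefined 1"]]
      order_trans[OF norm_ge_zero P[of "axis undefined 1"]] by simp_all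
  have "norm (g v* M + (1 / \<eta>) *\<^sub>R (e v* P + w v* M))
      \<le> norm (g v* M) + (1 / \<eta>) * norm (e v* P + w v* M)"
    using norm_triangle_ineq[of "g v* M" "(1 / \<eta>) *\<^sub>R (e v* P + w v* M)"] \<open>\<eta> > 0\<close> by simp
  also have "\<dots> \<le> norm (g v* M) + (1 / \<eta>) * (norm (e v* P) + norm (w v* M))"
    using norm_triangle_ineq[of "e v* P" "w v* M"] \<open>\<eta> > 0\<close> by (simp add: divide_right_mono)
  also have "\<dots> \<le> G * r * GF + (1 / \<eta>) * (G * (G * r\<^sup>2) + G * r * (G * r))"
  proof -
    have "norm (g v* M) \<le> G * r * GF"
      using norm_vector_matrix_mult_le[OF M, of g] mult_left_mono[OF assms(2) \<open>0 \<le> G * r\<close>]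
      by linarith
    moreover have "norm (e v* P) \<le> G * (G * r\<^sup>2)"
      using norm_vector_matrix_mult_le[OF P, of e] mult_left_mono[OF assms(3) \<open>0 \<le> G\<close>]
      by linarith
    moreover have "norm (w v* M) \<le> G * r * (G * r)"
      using norm_vector_matrix_mult_le[OF M, of w] mult_left_mono[OF assms(4) \<open>0 \<le> G * r\<close>]
      by linarith
    ultimately show ?thesis
      using \<open>\<eta> > 0\<close> by (intro add_mono mult_left_mono) auto
  qed
  also have "\<dots> = GF * G * r + 2 * G\<^sup>2 * r\<^sup>2 / \<eta>"
    by (simp add: power2_eq_square field_simps)
  finally show ?thesis .
qed

lemma gradient_bound_le_of_displacement_le:
  fixes G \<eta> GF r :: real
  assumes "1 < G" "0 < \<eta>" "0 \<le> GF" "0 \<le> r" "r \<le> G * \<eta> * GF"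
  shows "GF * G * r + 2 * G\<^sup>2 * r\<^sup>2 / \<eta> \<le> G ^ 5 * (3 * GF\<^sup>2 + GF ^ 3 * \<eta>) * \<eta>"
proof -
  have "GF * G * r + 2 * G\<^sup>2 * r\<^sup>2 / \<eta> \<le> GF * G * (G * \<eta> * GF) + 2 * G\<^sup>2 * (G * \<eta> * GF)\<^sup>2 / \<eta>"
    using assms by (intro add_mono mult_left_mono divide_right_mono power_mono) auto
  also have "\<dots> = (G\<^sup>2 + 2 * G ^ 4) * GF\<^sup>2 * \<eta>"
    using \<open>0 < \<eta>\<close> by (simp add: power2_eq_square field_simps numeral_eq_Suc)
  also have "\<dots> \<le> 3 * G ^ 5 * GF\<^sup>2 * \<eta>"
  proof -
    have "G\<^sup>2 \<le> G ^ 5" "G ^ 4 \<le> G ^ 5"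
      using \<open>1 < G\<close> by (simp_all add: power_increasing)
    then have "G\<^sup>2 + 2 * G ^ 4 \<le> 3 * G ^ 5"
      by linarith
    then show ?thesis
      using assms by (intro mult_right_mono) auto
  qed
  also have "\<dots> \<le> G ^ 5 * (3 * GF\<^sup>2 + GF ^ 3 * \<eta>) * \<eta>"
    using assms by (simp add: algebra_simps)
  finally show ?thesis .
qed

theorem lemmaA6:
  fixes X Y U V :: "(real^'n) set"
    and q qinv :: "real^'n \<Rightarrow> real^'n"
    and Jq Dqinv :: "real^'n \<Rightarrow> real^'n^'n"
    and D2qinv :: "real^'n \<Rightarrow> real^'n \<Rightarrow> real^'n^'n"
    and R :: "real^'n \<Rightarrow> real"
    and gradR :: "real^'n \<Rightarrow> real^'n"
    and HessR :: "real^'n \<Rightarrow> real^'n^'n"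
    and D3R :: "real^'n \<Rightarrow> real^'n \<Rightarrow> real^'n^'n"
    and G GF \<eta> :: real
    and xt xt1 g :: "real^'n"
  assumes
    \<comment> \<open>X, Y convex compact\<close>
    X: "convex X" "compact X" and Y: "convex Y" "compact Y"
    \<comment> \<open>q : X -> Y smooth bijection: restriction of a differentiable bijection U -> V between
        open neighbourhoods, with differentiable inverse qinv\<close>
    and UV: "open U" "open V" "X \<subseteq> U" "Y \<subseteq> V"
    and q_bij: "bij_betw q X Y" "bij_betw q U V"
    and qinv: "\<And>x. x \<in> U \<Longrightarrow> qinv (q x) = x" "\<And>y. y \<in> V \<Longrightarrow> q (qinv y) = y"
    and Jq: "\<And>x. x \<in> U \<Longrightarrow> (q has_derivative (\<lambda>h. Jq x *v h)) (at x)"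
    and Jq_cont: "continuous_on U Jq"
    and Dqinv: "\<And>y. y \<in> V \<Longrightarrow> (qinv has_derivative (\<lambda>h. Dqinv y *v h)) (at y)"
    and D2qinv: "\<And>y. y \<in> V \<Longrightarrow> (Dqinv has_derivative D2qinv y) (at y)"
    and D2qinv_cont: "continuous_on V D2qinv"
    \<comment> \<open>(A1)\<close>
    and R_deriv: "\<And>y. y \<in> V \<Longrightarrow> (R has_derivative (\<lambda>h. inner (gradR y) h)) (at y)"
    and R_hess: "\<And>y. y \<in> V \<Longrightarrow> (gradR has_derivative (\<lambda>h. HessR y *v h)) (at y)"
    and R_C2: "continuous_on V HessR"
    and R_strict: "strict_convex_on Y R"
    and A1: "\<And>x. x \<in> X \<Longrightarrow> invertible (HessR (q x)) \<and>
                 matrix_inv (HessR (q x)) = Jq x ** transpose (Jq x)"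
    \<comment> \<open>(A2)\<close>
    and G_gt: "G > 1"
    and q_lip: "G-lipschitz_on X q"
    and Dqinv_bd: "\<And>y h. y \<in> Y \<Longrightarrow> norm (Dqinv y *v h) \<le> G * norm h"
    and D2qinv_bd: "\<And>y h k. y \<in> Y \<Longrightarrow> norm (D2qinv y h *v k) \<le> G * norm h * norm k"
    and R_strong: "strongly_convex_on 1 Y R"
    and R_third: "\<And>y. y \<in> V \<Longrightarrow> (HessR has_derivative D3R y) (at y)"
    and gradR_bd: "\<And>y. y \<in> Y \<Longrightarrow> norm (gradR y) \<le> G"
    and D3R_bd: "\<And>y h k l. y \<in> Y \<Longrightarrow>
                   \<bar>inner l (D3R y h *v k)\<bar> \<le> G * norm h * norm k * norm l"
    and DR_lip: "\<And>z. z \<in> Y \<Longrightarrow> G-lipschitz_on Y (\<lambda>w. bregman R gradR z w)"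
    \<comment> \<open>the one OGD step\<close>
    and eta: "\<eta> > 0"
    and xt: "xt \<in> X"
    and g: "norm g \<le> GF"
    and xt1: "xt1 \<in> X"
    and xt1_min: "\<And>x. x \<in> X \<Longrightarrow>
        inner g (xt1 - xt) + 1 / (2 * \<eta>) * (norm (xt1 - xt))\<^sup>2
          \<le> inner g (x - xt) + 1 / (2 * \<eta>) * (norm (x - xt))\<^sup>2"
  shows "\<exists>D. GDERIV (eps_OGD q qinv Jq xt g \<eta>) (q xt1) :> D \<and>
             norm D \<le> G ^ 5 * (3 * GF\<^sup>2 + GF ^ 3 * \<eta>) * \<eta>"
proof -
  define yt y1 where "yt = q xt" and "y1 = q xt1"
  define r where "r = norm (y1 - yt)"
  have "xt \<in> U" "yt \<in> Y" "y1 \<in> Y" "y1 \<in> V"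
    using xt xt1 UV q_bij(1) by (auto simp: yt_def y1_def bij_betw_def)
  have "0 \<le> GF" "0 \<le> G"
    using order_trans[OF norm_ge_zero g] G_gt by simp_all
  have inv_Jq: "matrix_inv (Jq xt) = Dqinv yt"
    using matrix_inv_jacobian_of_left_inverse[OF UV(1) \<open>xt \<in> U\<close> qinv(1) Jq Dqinv]
      \<open>xt \<in> U\<close> \<open>yt \<in> Y\<close> UV(4) by (auto simp: yt_def)
  have derivs_within_Y: "(qinv has_derivative (\<lambda>h. Dqinv y *v h)) (at y within Y)"
    "(Dqinv has_derivative D2qinv y) (at y within Y)" if "y \<in> Y" for y
    using Dqinv D2qinv that UV(4) by (auto intro: has_derivative_at_withinI)
  have Dqinv_lipschitz: "norm ((Dqinv b - Dqinv a) *v k) \<le> G * norm (b - a) * norm k"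
    if "a \<in> Y" "b \<in> Y" for a b k
    using differentiable_bound_matrix_vector_mult[OF Y(1) derivs_within_Y(2) D2qinv_bd that] .
  have "norm (xt1 - xt) \<le> \<eta> * GF"
    using proximal_step_norm_le[OF X(1) xt xt1 eta xt1_min] mult_left_mono[OF g less_imp_le[OF eta]]
    by linarith
  then have r_le: "r \<le> G * \<eta> * GF"
    using lipschitz_onD[OF q_lip xt1 xt] mult_left_mono[OF _ \<open>0 \<le> G\<close>]
    by (fastforce simp: r_def y1_def yt_def dist_norm mult.assoc)
  have "norm (qinv y1 - qinv yt - Dqinv yt *v (y1 - yt)) \<le> G * r\<^sup>2"
    unfolding r_def
    by (rule linearization_error_le_lipschitz_jacobian[OF Y(1) \<open>0 \<le> G\<close> derivs_within_Y(1)
          Dqinv_lipschitz \<open>yt \<in> Y\<close> \<open>y1 \<in> Y\<close>])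
  then have "norm (eps_q q qinv Jq xt y1) \<le> G * r\<^sup>2"
    by (simp add: eps_q_def inv_Jq yt_def)
  then have "norm (g v* (Dqinv y1 - Dqinv yt) + (1 / \<eta>) *\<^sub>R (eps_q q qinv Jq xt y1 v* Dqinv y1
      + (Dqinv yt *v (y1 - yt)) v* (Dqinv y1 - Dqinv yt))) \<le> GF * G * r + 2 * G\<^sup>2 * r\<^sup>2 / \<eta>"
    using norm_eps_OGD_gradient_le[OF eta g] Dqinv_lipschitz Dqinv_bd
      \<open>yt \<in> Y\<close> \<open>y1 \<in> Y\<close> by (simp add: r_def)
  also have "\<dots> \<le> G ^ 5 * (3 * GF\<^sup>2 + GF ^ 3 * \<eta>) * \<eta>"
    using gradient_bound_le_of_displacement_le[OF G_gt eta \<open>0 \<le> GF\<close> _ r_le] by (simp add: r_def)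
  finally show ?thesis
    using eps_OGD_has_gderiv[OF Dqinv[OF \<open>y1 \<in> V\<close>], where Jq = Jq and xt = xt and q = q]
    by (auto simp: inv_Jq y1_def yt_def)
qed

end
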